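(* There exist constants $\beta\in(0,1)$, $C>0$ and $c>0$ such that for every $m>0$, every odd $n\ge5$, every $\epsilon\in(0,1)$ with $n\epsilon\ge C$, and every $\epsilon$-differentially private mechanism $\mathcal{M}:V^n\to V$, there is some $D\in\mathcal{CTM}$ with $$\mathrm{SWDIFF}(D,\mathcal{M}(D))\ge c\,\frac{m}{n\epsilon^2}\left(\ln\frac1\beta\right)^2$$ with probability at least $\beta$.
   Context: $V=[-m/2,m/2]$. A dataset is $D=(x_1,\dots,x_n)\in V^n$ (a multiset), indexed so that $x_1\le\dots\le x_n$, with median (optimal location) $\mathcal{T}(D)=x_{\lceil n/2\rceil}$. $\mathrm{SWDIFF}(D,\ell)=\sum_{i=1}^n|x_i-\ell|-\sum_{i=1}^n|x_i-\mathcal{T}(D)|$. $\mathcal{CTM}$ is the set of datasets with $|x_{i+1}-x_i|\ge|x_{j+1}-x_j|$ for all $1\le i<j\le\lceil n/2\rceil-1$ and $|x_i-x_{i-1}|\ge|x_j-x_{j-1}|$ for all $\lceil n/2\rceil+1\le j<i\le n$. Two datasets are neighboring if, as multisets, they differ in exactly one element; $\mathcal{M}$ is $\epsilon$-differentially private if $\Pr[\mathcal{M}(D)\in S]\le e^{\epsilon}\Pr[\mathcal{M}(D')\in S]$ for all neighboring $D,D'$ and measurable $S\subseteq V$. *)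

theory Defs
  imports "HOL-Probability.Probability" "HOL-Library.Multiset"
begin

definition Vdom :: "real \<Rightarrow> real set" where
  "Vdom m = {-m/2 .. m/2}"

definition datasets :: "real \<Rightarrow> nat \<Rightarrow> real multiset set" where
  "datasets m n = {D. size D = n \<and> set_mset D \<subseteq> Vdom m}"

text \<open>The i-th smallest element, 1-indexed: x_i.\<close>
definition xs :: "real multiset \<Rightarrow> nat \<Rightarrow> real" where
  "xs D i = sorted_list_of_multiset D ! (i - 1)"

definition median_loc :: "real multiset \<Rightarrow> real" where
  "median_loc D = xs D (nat \<lceil>real (size D) / 2\<rceil>)"

definition SWDIFF :: "real multiset \<Rightarrow> real \<Rightarrow> real" where
  "SWDIFF D l = (\<Sum>x\<in>#D. \<bar>x - l\<bar>) - (\<Sum>x\<in>#D. \<bar>x - median_loc D\<bar>)"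

definition CTM :: "real multiset set" where
  "CTM = {D. let n = size D; k = nat \<lceil>real n / 2\<rceil> in
      (\<forall>i j. 1 \<le> i \<and> i < j \<and> j \<le> k - 1 \<longrightarrow>
          \<bar>xs D (i+1) - xs D i\<bar> \<ge> \<bar>xs D (j+1) - xs D j\<bar>) \<and>
      (\<forall>i j. k + 1 \<le> j \<and> j < i \<and> i \<le> n \<longrightarrow>
          \<bar>xs D i - xs D (i-1)\<bar> \<ge> \<bar>xs D j - xs D (j-1)\<bar>)}"

text \<open>Neighboring datasets: as multisets they differ in exactly one element
  (same size, one element replaced).\<close>
definition neighboring :: "real multiset \<Rightarrow> real multiset \<Rightarrow> bool" where
  "neighboring D D' \<longleftrightarrow> size D = size D' \<and> size (D - D') = 1"

definition mechanism :: "real \<Rightarrow> nat \<Rightarrow> (real multiset \<Rightarrow> real measure) \<Rightarrow> bool" where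
  "mechanism m n M \<longleftrightarrow> (\<forall>D\<in>datasets m n.
      prob_space (M D) \<and> sets (M D) = sets borel \<and> measure (M D) (Vdom m) = 1)"

definition differentially_private ::
  "real \<Rightarrow> nat \<Rightarrow> real \<Rightarrow> (real multiset \<Rightarrow> real measure) \<Rightarrow> bool" where
  "differentially_private m n \<epsilon> M \<longleftrightarrow>
     (\<forall>D\<in>datasets m n. \<forall>D'\<in>datasets m n. neighboring D D' \<longrightarrow>
        (\<forall>S\<in>sets borel. S \<subseteq> Vdom m \<longrightarrow>
            measure (M D) S \<le> exp \<epsilon> * measure (M D') S))"

end

theory Submission
  imports Defs
begin

(* Take the 2t+1 = n equally spaced points with spacing d = m/(2n) and shift them s times by
   one step, where s is odd and s \<epsilon> lies in [1/3, 1]. Consecutive shifts are neighbouring,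
   so by group privacy the output distributions of the first and the last dataset differ by a
   factor of at most e^(s \<epsilon>) \<le> 3 on every event. For such a grid, a location at distance u
   from the median costs SWDIFF \<ge> (2j+1) u - j(j+1) d for each j \<le> t, which is of order
   s^2 d, i.e. of order m/(n \<epsilon>^2), once u \<ge> s d/2. The two medians are s d apart, so every
   location is that far from one of them: the two events "SWDIFF is large" cover V, and one
   of them must have probability at least 1/(3+1). *)

definition grid :: "real \<Rightarrow> real \<Rightarrow> nat \<Rightarrow> int \<Rightarrow> real multiset" where
  "grid a d t c = mset (map (\<lambda>i. a + of_int i * d) [c - int t..c + int t])"

lemma size_grid [simp]: "size (grid a d t c) = 2 * t + 1"
  unfolding grid_def by simp

lemma set_mset_grid: "set_mset (grid a d t c) = (\<lambda>i. a + of_int i * d) ` {c - int t..c + int t}"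
  unfolding grid_def by simp

lemma sorted_list_of_multiset_grid:
  assumes "d > 0"
  shows "sorted_list_of_multiset (grid a d t c) = map (\<lambda>i. a + of_int i * d) [c - int t..c + int t]"
proof -
  have "sorted (map (\<lambda>i. a + of_int i * d) [c - int t..c + int t])"
    unfolding sorted_map by (rule sorted_wrt_mono_rel[OF _ sorted_upto]) (use assms in auto)
  then show ?thesis
    unfolding grid_def by (simp only: sorted_list_of_multiset_mset sorted_sort_id)
qed

lemma xs_grid:
  assumes "d > 0" "1 \<le> i" "i \<le> 2 * t + 1"
  shows "xs (grid a d t c) i = a + of_int (c - int t + int i - 1) * d"
proof -
  have "[c - int t..c + int t] ! (i - 1) = c - int t + int (i - 1)"
    by (rule nth_upto) (use assms in auto)
  then show ?thesis
    unfolding xs_def sorted_list_of_multiset_grid[OF assms(1)] using assms by (simp add: of_nat_diff)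
qed

lemma nat_ceiling_half_odd: "nat \<lceil>real (2 * t + 1) / 2\<rceil> = t + 1"
proof -
  have "real (2 * t + 1) / 2 = real t + 1 / 2"
    by simp
  then have "\<lceil>real (2 * t + 1) / 2\<rceil> = int t + 1"
    by linarith
  then show ?thesis
    by simp
qed

lemma median_loc_grid:
  assumes "d > 0"
  shows "median_loc (grid a d t c) = a + of_int c * d"
  unfolding median_loc_def size_grid nat_ceiling_half_odd using xs_grid[OF assms, of "t + 1" t a c] by simp

lemma grid_in_CTM:
  assumes "d > 0"
  shows "grid a d t c \<in> CTM"
  unfolding CTM_def mem_Collect_eq Let_def size_grid nat_ceiling_half_odd
  by (auto simp: xs_grid[OF assms] algebra_simps of_nat_diff)

lemma grid_in_datasets:
  assumes "d \<ge> 0" "- m / 2 \<le> a + of_int (c - int t) * d" "a + of_int (c + int t) * d \<le> m / 2"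
  shows "grid a d t c \<in> datasets m (2 * t + 1)"
proof -
  have "a + of_int i * d \<in> Vdom m" if "c - int t \<le> i" "i \<le> c + int t" for i
  proof -
    have "of_int (c - int t) * d \<le> of_int i * d" "of_int i * d \<le> of_int (c + int t) * d"
      using that assms(1) by (intro mult_right_mono; simp)+
    then show ?thesis
      using assms(2,3) unfolding Vdom_def by simp
  qed
  then show ?thesis
    unfolding datasets_def by (auto simp: set_mset_grid)
qed

lemma neighboring_grid_shift:
  assumes "d > 0"
  shows "neighboring (grid a d t c) (grid a d t (c + 1))"
proof -
  let ?f = "\<lambda>i::int. a + of_int i * d"
  define B where "B = mset (map ?f [c - int t + 1..c + int t])"
  have "[c - int t..c + int t] = (c - int t) # [c - int t + 1..c + int t]"
    by (rule upto_rec1) simp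
  then have lower: "grid a d t c = add_mset (?f (c - int t)) B"
    unfolding grid_def B_def by simp
  have "[c + 1 - int t..c + 1 + int t] = [c - int t + 1..c + int t] @ [c + int t + 1]"
    using upto_rec2[of "c + 1 - int t" "c + 1 + int t"] by (simp add: algebra_simps)
  then have upper: "grid a d t (c + 1) = add_mset (?f (c + int t + 1)) B"
    unfolding grid_def B_def by simp
  have "?f (c - int t) \<noteq> ?f (c + int t + 1)"
    using assms by simp
  then have "grid a d t c - grid a d t (c + 1) = {#?f (c - int t)#}"
    unfolding lower upper by simp
  then show ?thesis
    unfolding neighboring_def by simp
qed

lemma sum_mset_grid:
  "(\<Sum>x\<in>#grid a d t c. g x) = (\<Sum>i = c - int t..c + int t. g (a + of_int i * d))"
  unfolding grid_def mset_map[symmetric] sum_mset_sum_list map_map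
    sum_set_upto_conv_sum_list_int[symmetric]
  by (simp add: comp_def)

lemma sum_centered_interval:
  "(\<Sum>i = c - int t..c + int t. h i) = h c + (\<Sum>k = 1..t. h (c + int k) + h (c - int k))"
proof (induction t)
  case 0
  then show ?case by simp
next
  case (Suc t)
  have "{c - int (Suc t)..c + int (Suc t)}
      = insert (c - int (Suc t)) (insert (c + int (Suc t)) {c - int t..c + int t})"
    by auto
  then show ?case
    using Suc by (simp add: algebra_simps)
qed

lemma SWDIFF_grid_ge:
  assumes "d > 0" "j \<le> t"
  shows "(2 * real j + 1) * \<bar>l - (a + of_int c * d)\<bar> - real j * (real j + 1) * d
           \<le> SWDIFF (grid a d t c) l"
proof -
  define u where "u = l - (a + of_int c * d)"
  define h where "h i = \<bar>a + of_int i * d - l\<bar> - \<bar>of_int (i - c) * d\<bar>" for i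
  define p where "p k = h (c + int k) + h (c - int k)" for k
  have "SWDIFF (grid a d t c) l = (\<Sum>i = c - int t..c + int t. h i)"
    unfolding SWDIFF_def median_loc_grid[OF assms(1)] sum_mset_grid h_def
    by (simp add: sum_subtractf algebra_simps)
  also have "\<dots> = \<bar>u\<bar> + (\<Sum>k = 1..t. p k)"
    unfolding sum_centered_interval h_def p_def u_def by (simp add: abs_minus_commute)
  finally have SW: "SWDIFF (grid a d t c) l = \<bar>u\<bar> + (\<Sum>k = 1..t. p k)" .
  have p: "p k = \<bar>real k * d - u\<bar> + \<bar>real k * d + u\<bar> - 2 * (real k * d)" for k
    unfolding p_def h_def u_def using assms(1) by (simp add: algebra_simps abs_mult)
  \<comment> \<open>each pair of grid points symmetric about the median contributes \<open>\<ge> 0\<close>, and \<open>\<ge> 2 (|u| - k d)\<close>\<close>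
  have "(\<Sum>k = 1..j. 2 * (\<bar>u\<bar> - real k * d)) \<le> (\<Sum>k = 1..j. p k)"
    by (intro sum_mono) (auto simp: p split: abs_split)
  also have "\<dots> \<le> (\<Sum>k = 1..t. p k)"
    by (rule sum_mono2) (use assms(2) in \<open>auto simp: p\<close>)
  finally have "(\<Sum>k = 1..j. 2 * (\<bar>u\<bar> - real k * d)) \<le> (\<Sum>k = 1..t. p k)" .
  moreover have "(\<Sum>k = 1..j. 2 * (\<bar>u\<bar> - real k * d)) = 2 * real j * \<bar>u\<bar> - real j * (real j + 1) * d"
    using double_gauss_sum_from_Suc_0[of j, where ?'a = real]
    by (simp add: sum_subtractf sum_distrib_left[symmetric] sum_distrib_right[symmetric] algebra_simps)
  ultimately show ?thesis
    unfolding SW u_def by (simp add: algebra_simps)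
qed

lemma SWDIFF_grid_far_from_median:
  assumes "d > 0" "j \<le> t" "(2 * real j + 1) * d / 2 \<le> \<bar>l - (a + of_int c * d)\<bar>"
  shows "(2 * real j + 1)\<^sup>2 * d / 4 \<le> SWDIFF (grid a d t c) l"
proof -
  have "(2 * real j + 1) * ((2 * real j + 1) * d / 2) \<le> (2 * real j + 1) * \<bar>l - (a + of_int c * d)\<bar>"
    using assms(3) by (intro mult_left_mono) auto
  moreover have "(2 * real j + 1)\<^sup>2 * d / 4 \<le> (2 * real j + 1) * ((2 * real j + 1) * d / 2) - real j * (real j + 1) * d"
    using assms(1) by (simp add: power2_eq_square algebra_simps)
  ultimately show ?thesis
    using SWDIFF_grid_ge[OF assms(1,2), of l a c] by linarith
qed

lemma borel_measurable_SWDIFF [measurable]: "SWDIFF D \<in> borel_measurable borel"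
proof -
  have "(\<lambda>l. \<Sum>x\<in>#D. \<bar>x - l\<bar>) \<in> borel_measurable borel" for D :: "real multiset"
    by (induction D) (simp_all add: borel_measurable_continuous_onI continuous_intros)
  then show ?thesis
    unfolding SWDIFF_def[abs_def] by simp
qed

lemma group_privacy:
  assumes dp: "differentially_private m n \<epsilon> M"
    and D: "\<And>k. k \<le> s \<Longrightarrow> D k \<in> datasets m n"
    and nb: "\<And>k. k < s \<Longrightarrow> neighboring (D k) (D (Suc k))"
    and S: "S \<in> sets borel" "S \<subseteq> Vdom m"
  shows "measure (M (D 0)) S \<le> exp (real s * \<epsilon>) * measure (M (D s)) S"
proof -
  have "measure (M (D 0)) S \<le> exp (real k * \<epsilon>) * measure (M (D k)) S" if "k \<le> s" for k
    using that
  proof (induction k)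
    case 0
    then show ?case by simp
  next
    case (Suc k)
    have "measure (M (D k)) S \<le> exp \<epsilon> * measure (M (D (Suc k))) S"
      using dp D[of k] D[of "Suc k"] nb[of k] S Suc.prems unfolding differentially_private_def by simp
    then have "exp (real k * \<epsilon>) * measure (M (D k)) S
        \<le> exp (real k * \<epsilon>) * (exp \<epsilon> * measure (M (D (Suc k))) S)"
      by (rule mult_left_mono) simp
    also have "\<dots> = exp (real (Suc k) * \<epsilon>) * measure (M (D (Suc k))) S"
      by (simp add: algebra_simps flip: exp_add)
    finally show ?case
      using Suc by simp
  qed
  then show ?thesis
    by simp
qed

lemma covering_events_lower_bound:
  assumes "prob_space M0" "sets M0 = sets borel" "prob_space M1" "sets M1 = sets borel"
    and V: "V \<in> sets borel" "measure M0 V = 1"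
    and B: "B0 \<in> sets borel" "B1 \<in> sets borel" "V \<subseteq> B0 \<union> B1"
    and ratio: "\<And>S. S \<in> sets borel \<Longrightarrow> S \<subseteq> V \<Longrightarrow> measure M0 S \<le> K * measure M1 S"
    and "K \<ge> 0"
  shows "1 / (K + 1) \<le> measure M0 B0 \<or> 1 / (K + 1) \<le> measure M1 B1"
proof (rule ccontr)
  interpret M0: prob_space M0 by fact
  interpret M1: prob_space M1 by fact
  assume "\<not> ?thesis"
  then have small: "measure M0 B0 < 1 / (K + 1)" "measure M1 B1 < 1 / (K + 1)"
    by auto
  have "1 = measure M0 V"
    using V by simp
  also have "\<dots> \<le> measure M0 ((V - B0) \<union> B0)"
    using V B assms(2) by (intro M0.finite_measure_mono) auto
  also have "\<dots> \<le> measure M0 (V - B0) + measure M0 B0"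
    using V B assms(2) by (intro measure_Un_le) auto
  also have "measure M0 (V - B0) \<le> K * measure M1 (V - B0)"
    using V B by (intro ratio) auto
  also have "\<dots> \<le> K * measure M1 B1"
    using V B assms(4) \<open>K \<ge> 0\<close> by (intro mult_left_mono M1.finite_measure_mono) auto
  also have "\<dots> \<le> K * (1 / (K + 1))"
    using small(2) \<open>K \<ge> 0\<close> by (intro mult_left_mono) auto
  finally have "1 < K * (1 / (K + 1)) + 1 / (K + 1)"
    using small(1) by linarith
  then show False
    using \<open>K \<ge> 0\<close> by (simp add: field_simps)
qed

lemma exists_odd_multiple_between_third_and_one:
  assumes "0 < \<epsilon>" "\<epsilon> \<le> 1"
  obtains j :: nat where "1 / 3 \<le> (2 * real j + 1) * \<epsilon>" "(2 * real j + 1) * \<epsilon> \<le> 1"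
proof -
  define y where "y = 1 / \<epsilon>"
  have "y \<ge> 1"
    unfolding y_def using assms by simp
  define j where "j = nat \<lfloor>(y - 1) / 2\<rfloor>"
  have j: "real j = of_int \<lfloor>(y - 1) / 2\<rfloor>"
    unfolding j_def using \<open>y \<ge> 1\<close> by simp
  have "real j \<le> (y - 1) / 2"
    unfolding j by (rule of_int_floor_le)
  then have "2 * real j + 1 \<le> y"
    by (simp add: field_simps)
  moreover have "(y - 1) / 2 - 1 < real j"
    unfolding j by (rule real_of_int_floor_gt_diff_one)
  then have "y \<le> 3 * (2 * real j + 1)"
    by (simp add: field_simps)
  ultimately show ?thesis
    using that[of j] assms(1) unfolding y_def by (simp add: field_simps)
qed

lemma private_mechanism_SWDIFF_lower_bound:
  assumes "m > 0" "odd n" "0 < \<epsilon>" "\<epsilon> < 1" "1 \<le> real n * \<epsilon>"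
    and M: "mechanism m n M" and dp: "differentially_private m n \<epsilon> M"
    and T: "T \<le> m / (72 * real n * \<epsilon>\<^sup>2)"
  shows "\<exists>D\<in>datasets m n. D \<in> CTM \<and> 1 / 4 \<le> measure (M D) {l. T \<le> SWDIFF D l}"
proof -
  obtain t where n: "n = 2 * t + 1"
    using \<open>odd n\<close> oddE by blast
  obtain j where j: "1 / 3 \<le> (2 * real j + 1) * \<epsilon>" "(2 * real j + 1) * \<epsilon> \<le> 1"
    by (rule exists_odd_multiple_between_third_and_one[of \<epsilon>]) (use \<open>0 < \<epsilon>\<close> \<open>\<epsilon> < 1\<close> in auto)
  define s where "s = 2 * j + 1"
  have s: "real s = 2 * real j + 1"
    unfolding s_def by simp
  have "real s * \<epsilon> \<le> real n * \<epsilon>"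
    unfolding s using j(2) \<open>1 \<le> real n * \<epsilon>\<close> by (rule order.trans)
  then have "s \<le> n" "j \<le> t"
    using \<open>0 < \<epsilon>\<close> unfolding s_def n by simp_all
  define d where "d = m / (2 * real n)"
  have "d > 0"
    unfolding d_def using \<open>m > 0\<close> n by simp
  define D where "D k = grid (- m / 2) d t (int t + int k)" for k
  have D: "D k \<in> datasets m n" if "k \<le> s" for k
    unfolding D_def n
  proof (rule grid_in_datasets)
    have "of_int (int t + int k + int t) * d \<le> real (2 * n) * d"
      using that \<open>s \<le> n\<close> \<open>d > 0\<close> n by (intro mult_right_mono) auto
    also have "real (2 * n) * d = m"
      unfolding d_def using n by simp
    finally show "- m / 2 + of_int (int t + int k + int t) * d \<le> m / 2"
      by (simp add: field_simps)
  qed (use \<open>d > 0\<close> in auto)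
  have nb: "neighboring (D k) (D (Suc k))" for k
    using neighboring_grid_shift[OF \<open>d > 0\<close>, of "- m / 2" t "int t + int k"]
    unfolding D_def by (simp add: algebra_simps)
  have ratio: "measure (M (D 0)) S \<le> 3 * measure (M (D s)) S"
    if "S \<in> sets borel" "S \<subseteq> Vdom m" for S
  proof -
    have "measure (M (D 0)) S \<le> exp (real s * \<epsilon>) * measure (M (D s)) S"
      using that D nb by (intro group_privacy[OF dp])
    also have "exp (real s * \<epsilon>) \<le> exp 1"
      using j(2) unfolding s by simp
    then have "exp (real s * \<epsilon>) \<le> 3"
      using exp_le by linarith
    then have "exp (real s * \<epsilon>) * measure (M (D s)) S \<le> 3 * measure (M (D s)) S"
      by (intro mult_right_mono) auto
    finally show ?thesis .
  qed
  have "T \<le> m / (72 * real n * \<epsilon>\<^sup>2)"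
    by fact
  also have "\<dots> = (1 / 3)\<^sup>2 * (m / (real n * \<epsilon>\<^sup>2)) / 8"
    by (simp add: power2_eq_square)
  also have "\<dots> \<le> ((2 * real j + 1) * \<epsilon>)\<^sup>2 * (m / (real n * \<epsilon>\<^sup>2)) / 8"
    using j(1) \<open>m > 0\<close> by (intro divide_right_mono mult_right_mono power_mono) auto
  also have "\<dots> = (2 * real j + 1)\<^sup>2 * d / 4"
    unfolding d_def using \<open>0 < \<epsilon>\<close> \<open>odd n\<close> odd_pos by (simp add: field_simps power2_eq_square)
  finally have T_le: "T \<le> (2 * real j + 1)\<^sup>2 * d / 4" .
  define \<mu> where "\<mu> k = - m / 2 + of_int (int t + int k) * d" for k
  have "\<mu> s = \<mu> 0 + (2 * real j + 1) * d"
    unfolding \<mu>_def s_def by (simp add: algebra_simps)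
  then have far: "(2 * real j + 1) * d / 2 \<le> \<bar>l - \<mu> 0\<bar> \<or> (2 * real j + 1) * d / 2 \<le> \<bar>l - \<mu> s\<bar>" for l
    by linarith
  have cover: "T \<le> SWDIFF (D 0) l \<or> T \<le> SWDIFF (D s) l" for l
    using far[of l] SWDIFF_grid_far_from_median[OF \<open>d > 0\<close> \<open>j \<le> t\<close>, of l "- m / 2"] T_le
    unfolding D_def \<mu>_def by (meson order_trans)
  have "1 / (3 + 1) \<le> measure (M (D 0)) {l. T \<le> SWDIFF (D 0) l}
      \<or> 1 / (3 + 1) \<le> measure (M (D s)) {l. T \<le> SWDIFF (D s) l}"
    using M D[of 0] D[of s] cover ratio unfolding mechanism_def
    by (intro covering_events_lower_bound[where V = "Vdom m"]) (auto simp: Vdom_def)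
  then show ?thesis
    using D[of 0] D[of s] grid_in_CTM[OF \<open>d > 0\<close>] unfolding D_def by auto
qed

theorem theorem7p22:
  shows "\<exists>\<beta>::real. 0 < \<beta> \<and> \<beta> < 1 \<and> (\<exists>C::real. C > 0 \<and> (\<exists>c::real. c > 0 \<and>
    (\<forall>(m::real) (n::nat) (\<epsilon>::real) (M :: real multiset \<Rightarrow> real measure).
       m > 0 \<and> odd n \<and> n \<ge> 5 \<and> 0 < \<epsilon> \<and> \<epsilon> < 1 \<and> real n * \<epsilon> \<ge> C \<and>
       mechanism m n M \<and> differentially_private m n \<epsilon> M \<longrightarrow>
       (\<exists>D\<in>datasets m n. D \<in> CTM \<and>
          measure (M D) {l. SWDIFF D l \<ge> c * (m / (real n * \<epsilon>\<^sup>2)) * (ln (1 / \<beta>))\<^sup>2}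
            \<ge> \<beta>))))"
proof (rule exI[of _ "1 / 4"], intro conjI, simp, simp, rule exI[of _ 1], intro conjI, simp,
    rule exI[of _ "1 / 1000"], intro conjI, simp, intro allI impI, elim conjE)
  fix m \<epsilon> :: real and n :: nat and M
  assume hyps: "m > 0" "odd n" "0 < \<epsilon>" "\<epsilon> < 1" "real n * \<epsilon> \<ge> 1"
    "mechanism m n M" "differentially_private m n \<epsilon> M"
  have "ln (1 / (1 / 4 :: real)) \<le> 3"
    using ln_le_minus_one[of 4] by simp
  then have "(ln (1 / (1 / 4 :: real)))\<^sup>2 \<le> 9"
    using power_mono[of "ln 4 :: real" 3 2] by simp
  moreover have scale_nonneg: "0 \<le> 1 / 1000 * (m / (real n * \<epsilon>\<^sup>2))"
    using \<open>m > 0\<close> by simp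
  ultimately have "1 / 1000 * (m / (real n * \<epsilon>\<^sup>2)) * (ln (1 / (1 / 4)))\<^sup>2
      \<le> 1 / 1000 * (m / (real n * \<epsilon>\<^sup>2)) * 9"
    by (intro mult_left_mono) simp_all
  also have "\<dots> \<le> m / (72 * real n * \<epsilon>\<^sup>2)"
    using scale_nonneg by (simp add: field_simps)
  finally have "1 / 1000 * (m / (real n * \<epsilon>\<^sup>2)) * (ln (1 / (1 / 4)))\<^sup>2 \<le> m / (72 * real n * \<epsilon>\<^sup>2)" .
  then show "\<exists>D\<in>datasets m n. D \<in> CTM \<and>
      1 / 4 \<le> measure (M D) {l. 1 / 1000 * (m / (real n * \<epsilon>\<^sup>2)) * (ln (1 / (1 / 4)))\<^sup>2 \<le> SWDIFF D l}"
    by (rule private_mechanism_SWDIFF_lower_bound[OF hyps])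
qed

end
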